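(* Let $G$ be an edge-colored graph. Then $G$ contains a spanning bipartite subgraph $H$ such that $2d_{H}^{c}(v)+3d_{H}(v)\geq d_G^{c}(v)+d_G(v)$ for every vertex $v\in V(H)$.
   Context: An edge-colored graph is a finite simple graph $G$ with a map $C:E(G)\to\mathbb{N}$; subgraphs inherit the coloring. For a subgraph $H$ and $v\in V(H)$, $d_H(v)$ is the degree of $v$ in $H$ and $d_H^c(v)$ is the number of distinct colors on edges of $H$ incident to $v$. *)

theory Defs
  imports Main
begin

text \<open>A spanning subgraph is given by an edge set F \<subseteq> E
on the same vertex set V; it inherits the colouring.\<close>

definition simple_graph :: "'a set \<Rightarrow> 'a set set \<Rightarrow> bool" where
  "simple_graph V E \<longleftrightarrow> finite V \<and> (\<forall>e\<in>E. e \<subseteq> V \<and> card e = 2)"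

definition inc_edges :: "'a set set \<Rightarrow> 'a \<Rightarrow> 'a set set" where
  "inc_edges E v = {e \<in> E. v \<in> e}"

definition degree :: "'a set set \<Rightarrow> 'a \<Rightarrow> nat" where
  "degree E v = card (inc_edges E v)"

definition color_degree :: "('a set \<Rightarrow> nat) \<Rightarrow> 'a set set \<Rightarrow> 'a \<Rightarrow> nat" where
  "color_degree C E v = card (C ` inc_edges E v)"

definition bipartite :: "'a set \<Rightarrow> 'a set set \<Rightarrow> bool" where
  "bipartite V F \<longleftrightarrow> (\<exists>X \<subseteq> V. \<forall>e\<in>F. card (e \<inter> X) = 1 \<and> card (e - X) = 1)"

end

theory Submission
  imports Defs
begin

text \<open>Choose for every vertex v a set R(v) of incident edges containing exactly one edge of
each colour at v, and give each edge e the weight 1 + |{u \<in> e. e \<in> R(u)}|.  Take a cut of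
maximum total weight.  Moving a vertex v to the other side must not increase the weight, so
the non-cut edges at v weigh at most as much as the cut edges at v.  An edge at v weighs at
least 1 + [e \<in> R(v)] and at most 2 + [e \<in> R(v)]; summing gives
d(v) + d^c(v) \<le> 3 d_H(v) + 2 |R(v) \<inter> H|, and the edges in R(v) \<inter> H have distinct colours.\<close>

lemma simple_graph_finite_edges: "simple_graph V E \<Longrightarrow> finite E"
  unfolding simple_graph_def by (meson PowI finite_Pow_iff finite_subset subsetI)

definition cut_edges :: "'a set set \<Rightarrow> 'a set \<Rightarrow> 'a set set" where
  "cut_edges E X = {e \<in> E. card (e \<inter> X) = 1 \<and> card (e - X) = 1}"

lemma bipartite_cut_edges: "X \<subseteq> V \<Longrightarrow> bipartite V (cut_edges E X)"
  unfolding bipartite_def cut_edges_def by auto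

lemma doubleton_crosses_iff:
  assumes "a \<noteq> b"
  shows "card ({a, b} \<inter> X) = 1 \<and> card ({a, b} - X) = 1 \<longleftrightarrow> (a \<in> X \<longleftrightarrow> b \<notin> X)"
  using assms by (cases "a \<in> X"; cases "b \<in> X") (auto simp: insert_Diff_if Int_insert_left)

lemma cut_edges_switch_vertex:
  assumes "\<forall>e\<in>E. card e = 2"
  shows "cut_edges E (sym_diff X {v}) = sym_diff (cut_edges E X) (inc_edges E v)"
proof (rule set_eqI)
  fix e
  let ?Y = "sym_diff X {v}"
  show "e \<in> cut_edges E ?Y \<longleftrightarrow> e \<in> sym_diff (cut_edges E X) (inc_edges E v)"
  proof (cases "e \<in> E")
    case True
    then obtain a b where e: "e = {a, b}" "a \<noteq> b"
      using assms by (auto simp: card_2_iff)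
    have switched: "x \<in> ?Y \<longleftrightarrow> (x = v \<longleftrightarrow> x \<notin> X)" for x
      by auto
    have crosses: "e \<in> cut_edges E Z \<longleftrightarrow> (a \<in> Z \<longleftrightarrow> b \<notin> Z)" for Z
      using True doubleton_crosses_iff[OF e(2)] by (simp add: cut_edges_def e(1))
    have "e \<in> cut_edges E ?Y \<longleftrightarrow> (v \<in> e \<longleftrightarrow> e \<notin> cut_edges E X)"
      unfolding crosses switched using e by auto
    then show ?thesis
      using True by (auto simp: inc_edges_def)
  next
    case False
    then show ?thesis
      by (simp add: cut_edges_def inc_edges_def)
  qed
qed

lemma exists_locally_maximal_cut:
  fixes w :: "'a set \<Rightarrow> 'b :: {linordered_cancel_ab_semigroup_add, comm_monoid_add}"
  assumes "simple_graph V E"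
  shows "\<exists>X \<subseteq> V. \<forall>v\<in>V. sum w (inc_edges E v - cut_edges E X)
                          \<le> sum w (inc_edges E v \<inter> cut_edges E X)"
proof -
  have "finite V" "finite E" and doubletons: "\<forall>e\<in>E. card e = 2"
    using assms simple_graph_finite_edges by (auto simp: simple_graph_def)
  define W where "W X = sum w (cut_edges E X)" for X
  have "finite (W ` Pow V)"
    using \<open>finite V\<close> by simp
  moreover have "Max (W ` Pow V) \<in> W ` Pow V"
    using \<open>finite (W ` Pow V)\<close> by (intro Max_in) auto
  then obtain X where "X \<subseteq> V" and "W X = Max (W ` Pow V)"
    by auto
  ultimately have X_max: "W Y \<le> W X" if "Y \<subseteq> V" for Y
    using that by simp
  have "sum w (inc_edges E v - cut_edges E X) \<le> sum w (inc_edges E v \<inter> cut_edges E X)"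
    if "v \<in> V" for v
  proof -
    let ?I = "inc_edges E v" and ?K = "cut_edges E X"
    have fin: "finite ?I" "finite ?K"
      using \<open>finite E\<close> by (simp_all add: inc_edges_def cut_edges_def)
    have "sum w (?K - ?I) + sum w (?I - ?K) = W (sym_diff X {v})"
      unfolding W_def cut_edges_switch_vertex[OF doubletons]
      by (rule sum.union_disjoint[symmetric]) (use fin in auto)
    also have "\<dots> \<le> W X"
      using \<open>X \<subseteq> V\<close> \<open>v \<in> V\<close> by (intro X_max) auto
    also have "\<dots> = sum w (?K - ?I) + sum w (?I \<inter> ?K)"
      unfolding W_def sum.Int_Diff[OF fin(2), of w ?I] by (simp add: Int_commute add.commute)
    finally show ?thesis
      by (rule add_le_imp_le_left)
  qed
  with \<open>X \<subseteq> V\<close> show ?thesis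
    by blast
qed

lemma card_filter_doubleton_bounds:
  assumes "card e = 2" and "v \<in> e"
  shows "of_bool (P v) \<le> card {u \<in> e. P u}" and "card {u \<in> e. P u} \<le> 1 + of_bool (P v)"
proof -
  have "finite e"
    using assms(1) card.infinite by fastforce
  show "of_bool (P v) \<le> card {u \<in> e. P u}"
    using \<open>finite e\<close> assms(2) by (cases "P v") (auto simp: card_gt_0_iff Suc_le_eq)
  have "card (e - {v}) = 1"
    using assms by simp
  have "{u \<in> e. P u} \<subseteq> (if P v then e else e - {v})"
    by auto
  then have "card {u \<in> e. P u} \<le> card (if P v then e else e - {v})"
    using \<open>finite e\<close> by (intro card_mono) auto
  then show "card {u \<in> e. P u} \<le> 1 + of_bool (P v)"
    using assms(1) \<open>card (e - {v}) = 1\<close> by (cases "P v") auto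
qed

lemma card_le_of_weight_balance:
  fixes w :: "'e \<Rightarrow> nat"
  assumes "finite I" "H \<subseteq> I" "R \<subseteq> I"
    and lower: "\<And>e. e \<in> I \<Longrightarrow> 1 + of_bool (e \<in> R) \<le> w e"
    and upper: "\<And>e. e \<in> I \<Longrightarrow> w e \<le> 2 + of_bool (e \<in> R)"
    and balance: "sum w (I - H) \<le> sum w H"
  shows "card I + card R \<le> 3 * card H + 2 * card (R \<inter> H)"
proof -
  have fin: "finite H" "finite (I - H)"
    using assms(1,2) finite_subset by auto
  have "card (I - H) + card (R \<inter> (I - H)) = (\<Sum>e\<in>I - H. 1 + of_bool (e \<in> R))"
    using fin by (simp only: sum.distrib) (simp add: Int_commute)
  also have "\<dots> \<le> sum w (I - H)"
    using lower by (intro sum_mono) auto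
  also have "\<dots> \<le> sum w H"
    by (fact balance)
  also have "\<dots> \<le> (\<Sum>e\<in>H. 2 + of_bool (e \<in> R))"
    using upper assms(2) by (intro sum_mono) blast
  also have "\<dots> = 2 * card H + card (R \<inter> H)"
    using fin by (simp only: sum.distrib) (simp add: Int_commute)
  finally have "card (I - H) + card (R \<inter> (I - H)) \<le> 2 * card H + card (R \<inter> H)" .
  moreover have "card I = card H + card (I - H)"
    using assms(1,2) by (metis card_Diff_subset card_mono le_add_diff_inverse fin(1))
  moreover have "card R = card (R \<inter> H) + card (R \<inter> (I - H))"
    using assms(1,3) fin by (subst card_Un_disjoint[symmetric]) (auto intro: arg_cong[where f = card])
  ultimately show ?thesis
    by linarith
qed

lemma degree_bound_at_balanced_vertex:
  fixes C :: "'a set \<Rightarrow> nat" and R :: "'a \<Rightarrow> 'a set set"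
  defines "w \<equiv> \<lambda>e. 1 + card {u \<in> e. e \<in> R u}"
  assumes "simple_graph V E" and "F \<subseteq> E"
    and R: "R v \<subseteq> inc_edges E v" "inj_on C (R v)" "C ` inc_edges E v = C ` R v"
    and balance: "sum w (inc_edges E v - F) \<le> sum w (inc_edges E v \<inter> F)"
  shows "color_degree C E v + degree E v \<le> 2 * color_degree C F v + 3 * degree F v"
proof -
  let ?I = "inc_edges E v" and ?H = "inc_edges F v"
  have H_eq: "?H = ?I \<inter> F"
    using \<open>F \<subseteq> E\<close> by (auto simp: inc_edges_def)
  have "finite ?I"
    using simple_graph_finite_edges[OF \<open>simple_graph V E\<close>] by (simp add: inc_edges_def)
  then have "finite ?H"
    unfolding H_eq by (rule finite_Int[OF disjI1])
  have incident: "card e = 2" "v \<in> e" if "e \<in> ?I" for e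
    using that \<open>simple_graph V E\<close> by (auto simp: inc_edges_def simple_graph_def)
  have "card ?I + card (R v) \<le> 3 * card ?H + 2 * card (R v \<inter> ?H)"
    unfolding H_eq
  proof (rule card_le_of_weight_balance)
    show "1 + of_bool (e \<in> R v) \<le> w e" "w e \<le> 2 + of_bool (e \<in> R v)" if "e \<in> ?I" for e
      using card_filter_doubleton_bounds[OF incident[OF that], of "\<lambda>u. e \<in> R u"]
      by (simp_all add: w_def)
    have "?I - ?I \<inter> F = ?I - F"
      by blast
    then show "sum w (?I - ?I \<inter> F) \<le> sum w (?I \<inter> F)"
      using balance by simp
  qed (use \<open>finite ?I\<close> R(1) in auto)
  moreover have "card (R v \<inter> ?H) \<le> color_degree C F v"
  proof -
    have "card (R v \<inter> ?H) = card (C ` (R v \<inter> ?H))"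
      using inj_on_subset[OF R(2) Int_lower1] by (rule card_image[symmetric])
    also have "\<dots> \<le> card (C ` ?H)"
      using \<open>finite ?H\<close> by (intro card_mono) auto
    finally show ?thesis
      by (simp add: color_degree_def)
  qed
  moreover have "color_degree C E v = card (R v)"
    unfolding color_degree_def R(3) using R(2) by (rule card_image)
  ultimately show ?thesis
    unfolding degree_def by linarith
qed

theorem lemma7:
  fixes V :: "'a set" and E :: "'a set set" and C :: "'a set \<Rightarrow> nat"
  assumes "simple_graph V E"
  shows "\<exists>F \<subseteq> E. bipartite V F \<and>
           (\<forall>v\<in>V. 2 * color_degree C F v + 3 * degree F v
                    \<ge> color_degree C E v + degree E v)"
proof -
  have "\<forall>v. \<exists>R \<subseteq> inc_edges E v. inj_on C R \<and> C ` inc_edges E v = C ` R"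
    using subset_image_inj by blast
  then obtain R where R: "\<And>v. R v \<subseteq> inc_edges E v" "\<And>v. inj_on C (R v)"
    "\<And>v. C ` inc_edges E v = C ` R v"
    by metis
  define w where "w e = 1 + card {u \<in> e. e \<in> R u}" for e
  obtain X where "X \<subseteq> V" and balance: "\<forall>v\<in>V. sum w (inc_edges E v - cut_edges E X)
                                                   \<le> sum w (inc_edges E v \<inter> cut_edges E X)"
    using exists_locally_maximal_cut[OF assms] by blast
  have "cut_edges E X \<subseteq> E"
    by (auto simp: cut_edges_def)
  moreover have "bipartite V (cut_edges E X)"
    using \<open>X \<subseteq> V\<close> by (rule bipartite_cut_edges)
  moreover have "color_degree C E v + degree E v
                   \<le> 2 * color_degree C (cut_edges E X) v + 3 * degree (cut_edges E X) v"
    if "v \<in> V" for v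
    using balance that unfolding w_def
    by (intro degree_bound_at_balanced_vertex[where R = R, OF assms \<open>cut_edges E X \<subseteq> E\<close> R])
      blast
  ultimately show ?thesis
    by blast
qed

end
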